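(* Let $\mathcal X\subseteq[0,1]$ be a Borel set with $0,1\in\mathcal X$, fix $\mu\in(0,1)$ and let $I_\mu=[(\mu-1)^{-1},\mu^{-1}]$. Let $E=(E_t)_{t\ge0}$ be an e-process for $\bar{\mathcal H}^\infty_\mu$. For $x\in\mathcal X$ let $E^x=(E^x_t)_{t\ge0}$ be the sequence of Borel functions $E^x_t:\mathcal X^t\to[0,+\infty)$ given by $E^x_t(y^t)=E_{t+1}(x,y^t)$ for $t\ge1$ and $E^x_0=E_1(x)$. Then there is $\lambda_1\in I_\mu$ such that for any $\tau\in\mathcal T$, any $Q\in\bar{\mathcal H}^\infty_\mu$ and any $x\in\mathcal X$, $$\mathbb E_Q[E^x_\tau]\le 1+\lambda_1(x-\mu).$$
   Context: $\mathcal X^\infty$ is the space of sequences in $\mathcal X$ with the product sigma-field generated by cylinder sets; $\mathcal F_t$ is generated by the first $t$ coordinates. $\mathcal T$ is the set of finite stopping times: measurable $\tau:\mathcal X^\infty\to\{0,1,2,\dots\}$ with $\{\tau=t\}\in\mathcal F_t$ for all $t\ge0$; for a sequence $g=(g_s)_{s\ge0}$, $g_\tau(y^\infty)=g_{\tau(y^\infty)}(y^{\tau(y^\infty)})$. $\bar{\mathcal H}^\infty_\mu$ is the set of probability measures $Q$ on $\mathcal X^\infty$ such that, for $X^\infty\sim Q$, the law of $X_1$ has mean $\mu$ and support of at most two points, and for every $t\ge2$ the conditional law of $X_t$ given $X^{t-1}$ has mean $\mu$ and is supported on at most two points, $Q$-almost surely. An e-process for $\bar{\mathcal H}^\infty_\mu$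 is a sequence $E=(E_t)_{t\ge0}$ of non-negative Borel functions $E_t:\mathcal X^t\to[0,+\infty)$ ($E_0$ a constant) with $\mathbb E_Q[E_\tau]\le1$ for all $Q\in\bar{\mathcal H}^\infty_\mu$ and all $\tau\in\mathcal T$. *)

theory Defs
  imports "HOL-Probability.Probability"
begin

definition obs_space :: "real set \<Rightarrow> real measure" where
  "obs_space X = restrict_space borel X"

text \<open>X^t: finite prefixes of length t, coordinates 0..t-1 (coordinate i is X_(i+1)).\<close>
definition prefix_space :: "real set \<Rightarrow> nat \<Rightarrow> (nat \<Rightarrow> real) measure" where
  "prefix_space X t = PiM {..<t} (\<lambda>_. obs_space X)"

definition seq_space :: "real set \<Rightarrow> (nat \<Rightarrow> real) measure" where
  "seq_space X = PiM UNIV (\<lambda>_. obs_space X)"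

definition pref :: "nat \<Rightarrow> (nat \<Rightarrow> real) \<Rightarrow> (nat \<Rightarrow> real)" where
  "pref t y = restrict y {..<t}"

definition stopping_times :: "real set \<Rightarrow> ((nat \<Rightarrow> real) \<Rightarrow> nat) set" where
  "stopping_times X = {\<tau>. \<tau> \<in> measurable (seq_space X) (count_space UNIV) \<and>
     (\<forall>t. \<exists>A \<in> sets (prefix_space X t).
        {y \<in> space (seq_space X). \<tau> y = t} = {y \<in> space (seq_space X). pref t y \<in> A})}"

text \<open>The hypothesis class bar H^infinity_mu: the conditional law of X_(t+1) given X^t is
  given by a kernel K t (a regular conditional distribution: the joint law of (X^t, X_(t+1))
  is the law of X^t composed with K t), and Q-a.s. this conditional law has mean mu and is
  supported on at most two points.\<close>
definition hyp_class :: "real set \<Rightarrow> real \<Rightarrow> (nat \<Rightarrow> real) measure set" where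
  "hyp_class X \<mu> = {Q. Q \<in> space (prob_algebra (seq_space X)) \<and>
     (\<exists>K :: nat \<Rightarrow> (nat \<Rightarrow> real) \<Rightarrow> real measure.
        (\<forall>t. K t \<in> prefix_space X t \<rightarrow>\<^sub>M prob_algebra (obs_space X)) \<and>
        (\<forall>t. distr Q (prefix_space X (Suc t)) (pref (Suc t)) =
              bind (distr Q (prefix_space X t) (pref t))
                   (\<lambda>z. distr (K t z) (prefix_space X (Suc t)) (\<lambda>x. z(t := x)))) \<and>
        (\<forall>t. AE y in Q.
              (\<integral>x. x \<partial>(K t (pref t y))) = \<mu> \<and>
              (\<exists>a b. emeasure (K t (pref t y)) (space (obs_space X) - {a, b}) = 0)))}"

definition stopped :: "(nat \<Rightarrow> (nat \<Rightarrow> real) \<Rightarrow> real) \<Rightarrow> ((nat \<Rightarrow> real) \<Rightarrow> nat) \<Rightarrow> (nat \<Rightarrow> real) \<Rightarrow> real" where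
  "stopped g \<tau> y = g (\<tau> y) (pref (\<tau> y) y)"

definition e_process :: "real set \<Rightarrow> real \<Rightarrow> (nat \<Rightarrow> (nat \<Rightarrow> real) \<Rightarrow> real) \<Rightarrow> bool" where
  "e_process X \<mu> E \<longleftrightarrow>
     (\<forall>t. E t \<in> borel_measurable (prefix_space X t)) \<and>
     (\<forall>t. \<forall>z \<in> space (prefix_space X t). 0 \<le> E t z) \<and>
     (\<forall>Q \<in> hyp_class X \<mu>. \<forall>\<tau> \<in> stopping_times X.
        (\<integral>\<^sup>+ y. ennreal (stopped E \<tau> y) \<partial>Q) \<le> 1)"

definition pcons :: "real \<Rightarrow> (nat \<Rightarrow> real) \<Rightarrow> (nat \<Rightarrow> real)" where
  "pcons x y = (\<lambda>i. if i = 0 then x else y (i - 1))"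

definition shifted :: "(nat \<Rightarrow> (nat \<Rightarrow> real) \<Rightarrow> real) \<Rightarrow> real \<Rightarrow> nat \<Rightarrow> (nat \<Rightarrow> real) \<Rightarrow> real" where
  "shifted E x t z = E (Suc t) (pref (Suc t) (pcons x z))"

end

theory Submission
  imports Defs
begin

text \<open>For a \<le> \<mu> < b in X and p with p a + (1 - p) b = \<mu>, draw the first observation
  from p \<delta>(a) + (1 - p) \<delta>(b) and continue, after a resp. b, with an arbitrary law Q_a
  resp. Q_b of the hypothesis class, stopping at 1 + \<tau>_a resp. 1 + \<tau>_b applied to the
  remaining sequence. The resulting law is again in the class and the combined time is a
  stopping time, so the e-process property yields the two-point test
  p E_{Q_a}[E^a_{\<tau>_a}] + (1 - p) E_{Q_b}[E^b_{\<tau>_b}] \<le> 1.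
  Thus every slope from (\<mu>, 1) to a value to the right of \<mu> is at most every slope from a
  value to the left of \<mu> to (\<mu>, 1), and the supremum \<lambda>1 of the former gives a line
  through (\<mu>, 1) above all values; testing against the points 0 and 1 puts \<lambda>1 in I_\<mu>.\<close>

lemma AE_bind_measure_pmf:
  assumes N: "N \<in> measure_pmf P \<rightarrow>\<^sub>M subprob_algebra M"
    and AE: "\<And>x. x \<in> set_pmf P \<Longrightarrow> AE y in N x. R y"
  shows "AE y in measure_pmf P \<bind> N. R y"
proof -
  have sets_N: "sets (N x) = sets M" for x
    using sets_kernel[OF N] by simp
  have "\<forall>x\<in>set_pmf P. \<exists>A. {y \<in> space M. \<not> R y} \<subseteq> A \<and> A \<in> sets M \<and> emeasure (N x) A = 0"
  proof
    fix x assume x: "x \<in> set_pmf P"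
    obtain A where "{y \<in> space (N x). \<not> R y} \<subseteq> A" "emeasure (N x) A = 0" "A \<in> sets (N x)"
      using AE[OF x] by (rule AE_E)
    then show "\<exists>A. {y \<in> space M. \<not> R y} \<subseteq> A \<and> A \<in> sets M \<and> emeasure (N x) A = 0"
      using sets_N sets_eq_imp_space_eq[OF sets_N] by auto
  qed
  then obtain A where A: "\<And>x. x \<in> set_pmf P \<Longrightarrow>
      {y \<in> space M. \<not> R y} \<subseteq> A x \<and> A x \<in> sets M \<and> emeasure (N x) (A x) = 0"
    by metis
  \<comment> \<open>The bad set need not be measurable, but it lies in every null set A x,
    hence in their countable intersection, which is null for every branch.\<close>
  define B where "B = (\<Inter>x\<in>set_pmf P. A x)"
  have B: "B \<in> sets M"
    unfolding B_def using A by (intro sets.countable_INT') (auto simp: set_pmf_not_empty)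
  have "emeasure (measure_pmf P \<bind> N) B = (\<integral>\<^sup>+x. emeasure (N x) B \<partial>measure_pmf P)"
    by (rule emeasure_bind[OF _ N B]) simp
  also have "\<dots> = (\<integral>\<^sup>+x. 0 \<partial>measure_pmf P)"
  proof (rule nn_integral_cong_AE)
    have "emeasure (N x) B = 0" if "x \<in> set_pmf P" for x
      using A[OF that] emeasure_mono[of B "A x" "N x"] sets_N unfolding B_def
      by (metis INT_lower le_zero_eq that)
    then show "AE x in measure_pmf P. emeasure (N x) B = 0"
      by (simp add: AE_measure_pmf_iff)
  qed
  finally show ?thesis
    using A B sets_N by (intro AE_I[where N = B]) (auto simp: B_def)
qed

lemma AE_distr_left_inverse:
  assumes f: "f \<in> M \<rightarrow>\<^sub>M N" and g: "g \<in> N \<rightarrow>\<^sub>M M"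
    and g_f: "\<And>x. x \<in> space M \<Longrightarrow> g (f x) = x"
    and AE: "AE x in M. R x"
  shows "AE y in distr M N f. R (g y)"
proof -
  obtain A where A: "{x \<in> space M. \<not> R x} \<subseteq> A" "emeasure M A = 0" "A \<in> sets M"
    using AE by (rule AE_E)
  have "emeasure (distr M N f) (g -` A \<inter> space N) = emeasure M (f -` (g -` A \<inter> space N) \<inter> space M)"
    using g A(3) by (intro emeasure_distr[OF f]) measurable
  also have "f -` (g -` A \<inter> space N) \<inter> space M = A"
    using g_f measurable_space[OF f] sets.sets_into_space[OF A(3)] by auto
  finally have "g -` A \<inter> space N \<in> null_sets (distr M N f)"
    using A g by (auto intro: null_setsI)
  moreover have "{y \<in> space (distr M N f). \<not> R (g y)} \<subseteq> g -` A \<inter> space N"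
    using A(1) measurable_space[OF g] by auto
  ultimately show ?thesis
    by (rule AE_I')
qed

lemma measurable_from_measure_pmf: "(\<And>x. f x \<in> space N) \<Longrightarrow> f \<in> measure_pmf P \<rightarrow>\<^sub>M N"
  by (subst measurable_cong_sets[OF sets_measure_pmf_count_space refl]) auto

lemma supporting_line_of_two_point_bounds:
  fixes \<mu> :: real and X :: "real set" and F :: "real \<Rightarrow> 'j \<Rightarrow> real"
  assumes \<mu>: "0 < \<mu>" "\<mu> < 1" and X: "0 \<in> X" "1 \<in> X"
    and nonneg: "\<And>x j. x \<in> X \<Longrightarrow> j \<in> J \<Longrightarrow> 0 \<le> F x j"
    and pair: "\<And>a b i j. a \<in> X \<Longrightarrow> b \<in> X \<Longrightarrow> i \<in> J \<Longrightarrow> j \<in> J \<Longrightarrow> a \<le> \<mu> \<Longrightarrow> \<mu> < b \<Longrightarrow>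
      (b - \<mu>) * F a i + (\<mu> - a) * F b j \<le> b - a"
  shows "\<exists>l \<in> {1 / (\<mu> - 1) .. 1 / \<mu>}. \<forall>x \<in> X. \<forall>j \<in> J. F x j \<le> 1 + l * (x - \<mu>)"
proof -
  \<comment> \<open>l is the supremum of the slopes from (\<mu>, 1) to the values right of \<mu>; the extra
    element 1 / (\<mu> - 1) makes S nonempty and bounds l from below.\<close>
  define S where "S = insert (1 / (\<mu> - 1)) {(F b j - 1) / (b - \<mu>) | b j. b \<in> X \<and> j \<in> J \<and> \<mu> < b}"
  define l where "l = Sup S"
  have S_le: "s \<le> 1 / \<mu>" if "s \<in> S" for s
  proof -
    have "(F b j - 1) / (b - \<mu>) \<le> 1 / \<mu>" if b: "b \<in> X" "\<mu> < b" and j: "j \<in> J" for b j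
    proof -
      have "\<mu> * F b j \<le> b"
        using pair[OF X(1) b(1) j j] nonneg[OF X(1) j] \<mu> b(2)
        by (smt (verit) mult_nonneg_nonneg)
      then show ?thesis
        using \<mu> b(2) by (simp add: divide_le_eq field_simps)
    qed
    moreover have "1 / (\<mu> - 1) \<le> 1 / \<mu>"
      using \<mu> by (simp add: divide_le_eq)
    ultimately show ?thesis
      using that unfolding S_def by blast
  qed
  have bdd: "bdd_above S"
    using S_le by (intro bdd_aboveI) blast
  have "l \<in> {1 / (\<mu> - 1) .. 1 / \<mu>}"
    unfolding l_def using S_le bdd by (auto intro!: cSup_upper cSup_least simp: S_def)
  moreover have "F x j \<le> 1 + l * (x - \<mu>)" if x: "x \<in> X" and j: "j \<in> J" for x j
  proof (cases "\<mu> < x")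
    case True
    then have "(F x j - 1) / (x - \<mu>) \<le> l"
      unfolding l_def using x j by (intro cSup_upper bdd) (auto simp: S_def)
    then show ?thesis
      using True by (simp add: divide_le_eq field_simps)
  next
    case False
    have "(1 - \<mu>) * F x j + (\<mu> - x) * F 1 j \<le> 1 - x"
      using pair[OF x X(2) j j] False \<mu> by simp
    then have le_1: "(1 - \<mu>) * F x j \<le> 1 - x"
      using nonneg[OF X(2) j] False by (smt (verit) mult_nonneg_nonneg)
    show ?thesis
    proof (cases "x = \<mu>")
      case True
      then show ?thesis
        using le_1 \<mu> by simp
    next
      case False
      with \<open>\<not> \<mu> < x\<close> have x\<mu>: "x < \<mu>"
        by simp
      have "s \<le> (1 - F x j) / (\<mu> - x)" if "s \<in> S" for s
      proof -
        have "(F b i - 1) / (b - \<mu>) \<le> (1 - F x j) / (\<mu> - x)" if b: "b \<in> X" "\<mu> < b" and i: "i \<in> J" for b i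
          using pair[OF x b(1) j i] x\<mu> b(2)
          by (simp add: divide_le_eq le_divide_eq field_simps)
        moreover have "1 / (\<mu> - 1) \<le> (1 - F x j) / (\<mu> - x)"
          using le_1 x\<mu> \<mu> by (simp add: divide_le_eq le_divide_eq field_simps)
        ultimately show ?thesis
          using that unfolding S_def by blast
      qed
      then have "l \<le> (1 - F x j) / (\<mu> - x)"
        unfolding l_def by (intro cSup_least) (auto simp: S_def)
      then show ?thesis
        using x\<mu> by (simp add: le_divide_eq field_simps)
    qed
  qed
  ultimately show ?thesis
    by blast
qed

section \<open>Sequences, prefixes and stopping times\<close>

lemma space_obs_space [simp]: "space (obs_space X) = X"
  by (simp add: obs_space_def space_restrict_space)

lemma space_prefix_space: "space (prefix_space X t) = {..<t} \<rightarrow>\<^sub>E X"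
  by (simp add: prefix_space_def space_PiM)

lemma measurable_pref [measurable]: "pref t \<in> seq_space X \<rightarrow>\<^sub>M prefix_space X t"
  unfolding pref_def seq_space_def prefix_space_def
  by (rule measurable_restrict_subset) auto

lemma sets_obs_space_singleton: "a \<in> X \<Longrightarrow> {a} \<in> sets (obs_space X)"
  unfolding obs_space_def
  by (auto simp: sets_restrict_space image_iff intro!: bexI[of _ "{a}"])

lemma sets_PiM_obs_coordinate_eq:
  assumes "a \<in> X" "i \<in> I"
  shows "{y \<in> space (PiM I (\<lambda>_. obs_space X)). y i = a} \<in> sets (PiM I (\<lambda>_. obs_space X))"
proof -
  have "{y \<in> space (PiM I (\<lambda>_. obs_space X)). y i = a} =
      (\<lambda>y. y i) -` {a} \<inter> space (PiM I (\<lambda>_. obs_space X))"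
    by auto
  then show ?thesis
    using measurable_sets[OF measurable_component_singleton[OF assms(2)]
        sets_obs_space_singleton[OF assms(1)]]
    by simp
qed

lemma sets_seq_space_head_eq: "a \<in> X \<Longrightarrow> {y \<in> space (seq_space X). y 0 = a} \<in> sets (seq_space X)"
  unfolding seq_space_def by (rule sets_PiM_obs_coordinate_eq) auto

lemma sets_prefix_space_head_eq:
  "a \<in> X \<Longrightarrow> {z \<in> space (prefix_space X (Suc t)). z 0 = a} \<in> sets (prefix_space X (Suc t))"
  unfolding prefix_space_def by (rule sets_PiM_obs_coordinate_eq) auto

definition seq_tl :: "(nat \<Rightarrow> real) \<Rightarrow> (nat \<Rightarrow> real)" where
  "seq_tl y = (\<lambda>i. y (Suc i))"

definition prefix_tl :: "nat \<Rightarrow> (nat \<Rightarrow> real) \<Rightarrow> (nat \<Rightarrow> real)" where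
  "prefix_tl n z = (\<lambda>i\<in>{..<n}. z (Suc i))"

definition prefix_cons :: "nat \<Rightarrow> real \<Rightarrow> (nat \<Rightarrow> real) \<Rightarrow> (nat \<Rightarrow> real)" where
  "prefix_cons n c z = restrict (pcons c z) {..<n}"

lemma measurable_seq_tl [measurable]: "seq_tl \<in> seq_space X \<rightarrow>\<^sub>M seq_space X"
  unfolding seq_tl_def seq_space_def
  by (rule measurable_abs_UNIV) (rule measurable_component_singleton, simp)

lemma measurable_pcons [measurable]: "c \<in> X \<Longrightarrow> pcons c \<in> seq_space X \<rightarrow>\<^sub>M seq_space X"
  unfolding pcons_def seq_space_def
  apply (rule measurable_abs_UNIV)
  subgoal for n by (cases n) (auto intro: measurable_component_singleton)
  done

lemma measurable_prefix_tl [measurable]: "prefix_tl n \<in> prefix_space X (Suc n) \<rightarrow>\<^sub>M prefix_space X n"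
  unfolding prefix_tl_def prefix_space_def
  by (rule measurable_restrict) (rule measurable_component_singleton, simp)

lemma measurable_prefix_cons:
  "c \<in> X \<Longrightarrow> prefix_cons (Suc n) c \<in> prefix_space X n \<rightarrow>\<^sub>M prefix_space X (Suc n)"
  unfolding prefix_cons_def pcons_def prefix_space_def
  apply (rule measurable_restrict)
  subgoal for i by (cases i) (auto intro: measurable_component_singleton)
  done

lemma measurable_fun_upd_prefix:
  "(\<lambda>(z, x). z(t := x)) \<in> prefix_space X t \<Otimes>\<^sub>M obs_space X \<rightarrow>\<^sub>M prefix_space X (Suc t)"
proof -
  have "{..<Suc t} = insert t {..<t}"
    by auto
  then show ?thesis
    unfolding prefix_space_def
    using measurable_add_dim[of t "{..<t}" "\<lambda>_. obs_space X"] by simp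
qed

lemma measurable_fun_upd_prefix_fixed:
  assumes "z \<in> space (prefix_space X t)"
  shows "(\<lambda>x. z(t := x)) \<in> obs_space X \<rightarrow>\<^sub>M prefix_space X (Suc t)"
proof -
  have "{..<Suc t} = insert t {..<t}"
    by auto
  then show ?thesis
    using assms measurable_component_update[of z "{..<t}" "\<lambda>_. obs_space X" t]
    unfolding prefix_space_def by simp
qed

lemma pcons_0 [simp]: "pcons c y 0 = c"
  by (simp add: pcons_def)

lemma seq_tl_pcons [simp]: "seq_tl (pcons c y) = y"
  by (simp add: seq_tl_def pcons_def)

lemma pcons_head_seq_tl: "pcons (y 0) (seq_tl y) = y"
  by (auto simp: pcons_def seq_tl_def fun_eq_iff)

lemma pref_seq_tl: "pref n (seq_tl y) = prefix_tl n (pref (Suc n) y)"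
  by (auto simp: pref_def prefix_tl_def seq_tl_def)

lemma pref_Suc_pcons: "pref (Suc n) (pcons c y) = prefix_cons (Suc n) c (pref n y)"
  by (auto simp: pref_def prefix_cons_def pcons_def fun_eq_iff)

lemma pref_Suc_pcons_pref: "pref (Suc t) (pcons c (pref t y)) = pref (Suc t) (pcons c y)"
  by (auto simp: pref_def pcons_def fun_eq_iff)

lemma prefix_tl_prefix_cons:
  "z \<in> space (prefix_space X n) \<Longrightarrow> prefix_tl n (prefix_cons (Suc n) c z) = z"
  by (auto simp: prefix_tl_def prefix_cons_def pcons_def space_prefix_space PiE_def
      extensional_def fun_eq_iff)

lemma prefix_cons_fun_upd:
  "(prefix_cons (Suc n) c z)(Suc n := x) = prefix_cons (Suc (Suc n)) c (z(n := x))"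
  by (auto simp: prefix_cons_def pcons_def fun_eq_iff)

lemma measurable_stopping_time: "\<tau> \<in> stopping_times X \<Longrightarrow> \<tau> \<in> seq_space X \<rightarrow>\<^sub>M count_space UNIV"
  by (simp add: stopping_times_def)

lemma stopping_timeE:
  assumes "\<tau> \<in> stopping_times X"
  obtains A where "A \<in> sets (prefix_space X t)"
    "\<And>y. y \<in> space (seq_space X) \<Longrightarrow> \<tau> y = t \<longleftrightarrow> pref t y \<in> A"
  using assms unfolding stopping_times_def by blast

lemma stopping_timeI:
  assumes "\<tau> \<in> seq_space X \<rightarrow>\<^sub>M count_space UNIV"
    and "\<And>t. \<exists>A \<in> sets (prefix_space X t). \<forall>y \<in> space (seq_space X). \<tau> y = t \<longleftrightarrow> pref t y \<in> A"
  shows "\<tau> \<in> stopping_times X"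
proof -
  have "\<exists>A \<in> sets (prefix_space X t).
      {y \<in> space (seq_space X). \<tau> y = t} = {y \<in> space (seq_space X). pref t y \<in> A}" for t
  proof -
    obtain A where "A \<in> sets (prefix_space X t)"
      "\<forall>y \<in> space (seq_space X). \<tau> y = t \<longleftrightarrow> pref t y \<in> A"
      using assms(2) by blast
    then show ?thesis
      by blast
  qed
  with assms(1) show ?thesis
    unfolding stopping_times_def by blast
qed

lemma borel_measurable_stopped:
  assumes "\<tau> \<in> stopping_times X" "\<And>t. g t \<in> borel_measurable (prefix_space X t)"
  shows "stopped g \<tau> \<in> borel_measurable (seq_space X)"
  unfolding stopped_def
  by (rule measurable_compose_countable[OF measurable_compose[OF measurable_pref assms(2)]
        measurable_stopping_time[OF assms(1)]])

definition branch_time :: "real \<Rightarrow> ((nat \<Rightarrow> real) \<Rightarrow> nat) \<Rightarrow> ((nat \<Rightarrow> real) \<Rightarrow> nat) \<Rightarrow>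
    (nat \<Rightarrow> real) \<Rightarrow> nat" where
  "branch_time a \<tau>a \<tau>b y = Suc (if y 0 = a then \<tau>a (seq_tl y) else \<tau>b (seq_tl y))"

lemma branch_time_stopping_time:
  assumes a: "a \<in> X" and \<tau>a: "\<tau>a \<in> stopping_times X" and \<tau>b: "\<tau>b \<in> stopping_times X"
  shows "branch_time a \<tau>a \<tau>b \<in> stopping_times X"
proof -
  have "(\<lambda>y. if y 0 = a then \<tau>a (seq_tl y) else \<tau>b (seq_tl y)) \<in> seq_space X \<rightarrow>\<^sub>M count_space UNIV"
    using \<tau>a \<tau>b sets_seq_space_head_eq[OF a]
    by (intro measurable_If measurable_compose[OF measurable_seq_tl measurable_stopping_time])
  then have meas: "branch_time a \<tau>a \<tau>b \<in> seq_space X \<rightarrow>\<^sub>M count_space UNIV"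
    unfolding branch_time_def by (rule measurable_compose) simp
  have "\<exists>A \<in> sets (prefix_space X t). \<forall>y \<in> space (seq_space X).
      branch_time a \<tau>a \<tau>b y = t \<longleftrightarrow> pref t y \<in> A" for t
  proof (cases t)
    case 0
    then show ?thesis
      by (auto simp: branch_time_def intro!: bexI[of _ "{}"])
  next
    case (Suc s)
    obtain Aa where Aa: "Aa \<in> sets (prefix_space X s)"
      "\<And>y. y \<in> space (seq_space X) \<Longrightarrow> \<tau>a y = s \<longleftrightarrow> pref s y \<in> Aa"
      using stopping_timeE[OF \<tau>a, where t = s] by blast
    obtain Ab where Ab: "Ab \<in> sets (prefix_space X s)"
      "\<And>y. y \<in> space (seq_space X) \<Longrightarrow> \<tau>b y = s \<longleftrightarrow> pref s y \<in> Ab"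
      using stopping_timeE[OF \<tau>b, where t = s] by blast
    let ?S = "space (prefix_space X t)"
    let ?Z = "{z \<in> ?S. z 0 = a}"
    define A where "A = (?Z \<inter> (prefix_tl s -` Aa \<inter> ?S)) \<union> ((?S - ?Z) \<inter> (prefix_tl s -` Ab \<inter> ?S))"
    have "A \<in> sets (prefix_space X t)"
      unfolding A_def Suc
      using sets_prefix_space_head_eq[OF a] measurable_sets[OF measurable_prefix_tl Aa(1)]
        measurable_sets[OF measurable_prefix_tl Ab(1)]
      by auto
    moreover have "branch_time a \<tau>a \<tau>b y = t \<longleftrightarrow> pref t y \<in> A" if y: "y \<in> space (seq_space X)" for y
    proof -
      have "seq_tl y \<in> space (seq_space X)" "pref t y \<in> ?S"
        using y by (auto intro: measurable_space[OF measurable_seq_tl] measurable_space[OF measurable_pref])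
      moreover have "pref t y 0 = y 0"
        by (simp add: Suc pref_def)
      ultimately show ?thesis
        using Aa(2)[of "seq_tl y"] Ab(2)[of "seq_tl y"]
        by (auto simp: A_def Suc branch_time_def pref_seq_tl)
    qed
    ultimately show ?thesis
      by blast
  qed
  with meas show ?thesis
    by (rule stopping_timeI)
qed

lemma stopped_branch_time_pcons:
  "stopped E (branch_time a \<tau>a \<tau>b) (pcons c w) =
    stopped (shifted E c) (if c = a then \<tau>a else \<tau>b) w"
  by (simp add: stopped_def branch_time_def shifted_def pref_Suc_pcons_pref)

section \<open>Disintegration into two-point kernels\<close>

definition prefix_law :: "real set \<Rightarrow> (nat \<Rightarrow> real) measure \<Rightarrow> nat \<Rightarrow> (nat \<Rightarrow> real) measure" where
  "prefix_law X Q t = distr Q (prefix_space X t) (pref t)"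

definition append_law :: "real set \<Rightarrow> nat \<Rightarrow> real measure \<Rightarrow> (nat \<Rightarrow> real) \<Rightarrow> (nat \<Rightarrow> real) measure" where
  "append_law X t M z = distr M (prefix_space X (Suc t)) (\<lambda>x. z(t := x))"

definition two_point_mean :: "real set \<Rightarrow> real \<Rightarrow> real measure \<Rightarrow> bool" where
  "two_point_mean X \<mu> M \<longleftrightarrow>
     (\<integral>x. x \<partial>M) = \<mu> \<and> (\<exists>a b. emeasure M (space (obs_space X) - {a, b}) = 0)"

definition hyp_kernel :: "real set \<Rightarrow> real \<Rightarrow> (nat \<Rightarrow> real) measure \<Rightarrow>
    (nat \<Rightarrow> (nat \<Rightarrow> real) \<Rightarrow> real measure) \<Rightarrow> bool" where
  "hyp_kernel X \<mu> Q K \<longleftrightarrow>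
     (\<forall>t. K t \<in> prefix_space X t \<rightarrow>\<^sub>M prob_algebra (obs_space X)) \<and>
     (\<forall>t. prefix_law X Q (Suc t) = prefix_law X Q t \<bind> (\<lambda>z. append_law X t (K t z) z)) \<and>
     (\<forall>t. AE y in Q. two_point_mean X \<mu> (K t (pref t y)))"

lemma hyp_class_iff:
  "Q \<in> hyp_class X \<mu> \<longleftrightarrow> Q \<in> space (prob_algebra (seq_space X)) \<and> (\<exists>K. hyp_kernel X \<mu> Q K)"
  by (simp add: hyp_class_def hyp_kernel_def prefix_law_def append_law_def two_point_mean_def)

lemma measurable_append_law:
  "M \<in> prefix_space X t \<rightarrow>\<^sub>M prob_algebra (obs_space X) \<Longrightarrow>
    (\<lambda>z. append_law X t (M z) z) \<in> prefix_space X t \<rightarrow>\<^sub>M subprob_algebra (prefix_space X (Suc t))"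
  unfolding append_law_def
  by (rule measurable_prob_algebraD[OF measurable_distr_prob_space2[OF _ measurable_fun_upd_prefix]])

lemma prefix_law_prob:
  assumes "Q \<in> space (prob_algebra (seq_space X))"
  shows "prefix_law X Q t \<in> space (prob_algebra (prefix_space X t))"
proof -
  have "pref t \<in> Q \<rightarrow>\<^sub>M prefix_space X t"
    using assms by (simp add: space_prob_algebra cong: measurable_cong_sets)
  moreover have "prob_space Q"
    using assms by (simp add: space_prob_algebra)
  ultimately show ?thesis
    by (simp add: prefix_law_def space_prob_algebra prob_space.prob_space_distr)
qed

lemma space_prefix_law_ne:
  assumes "Q \<in> space (prob_algebra (seq_space X))"
  shows "space (prefix_law X Q t) \<noteq> {}"
proof -
  have "space Q \<noteq> {}" "space Q = space (seq_space X)"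
    using assms prob_space.not_empty sets_eq_imp_space_eq by (auto simp: space_prob_algebra)
  then obtain y where "y \<in> space (seq_space X)"
    by auto
  then have "pref t y \<in> space (prefix_space X t)"
    by (rule measurable_space[OF measurable_pref])
  then show ?thesis
    by (auto simp: prefix_law_def)
qed

lemma prefix_law_Suc_prefix_cons:
  assumes Q: "Q \<in> space (prob_algebra (seq_space X))" and c: "c \<in> X"
    and K: "K \<in> prefix_space X t \<rightarrow>\<^sub>M prob_algebra (obs_space X)"
    and step: "prefix_law X Q (Suc t) = prefix_law X Q t \<bind> (\<lambda>z. append_law X t (K z) z)"
  shows "distr (prefix_law X Q (Suc t)) (prefix_space X (Suc (Suc t))) (prefix_cons (Suc (Suc t)) c) =
    prefix_law X Q t \<bind> (\<lambda>z. append_law X (Suc t) (K z) (prefix_cons (Suc t) c z))"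
proof -
  have K': "(\<lambda>z. append_law X t (K z) z) \<in> prefix_law X Q t \<rightarrow>\<^sub>M subprob_algebra (prefix_space X (Suc t))"
    using measurable_append_law[OF K] by (simp add: prefix_law_def cong: measurable_cong_sets)
  have "distr (prefix_law X Q (Suc t)) (prefix_space X (Suc (Suc t))) (prefix_cons (Suc (Suc t)) c) =
      prefix_law X Q t \<bind>
        (\<lambda>z. distr (append_law X t (K z) z) (prefix_space X (Suc (Suc t))) (prefix_cons (Suc (Suc t)) c))"
    unfolding step by (rule distr_bind[OF K' space_prefix_law_ne[OF Q] measurable_prefix_cons[OF c]])
  also have "\<dots> = prefix_law X Q t \<bind> (\<lambda>z. append_law X (Suc t) (K z) (prefix_cons (Suc t) c z))"
  proof (rule bind_cong[OF refl])
    fix z assume "z \<in> space (prefix_law X Q t)"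
    then have z: "z \<in> space (prefix_space X t)"
      by (simp add: prefix_law_def)
    have "sets (K z) = sets (obs_space X)"
      using measurable_space[OF K z] by (simp add: space_prob_algebra)
    then have "(\<lambda>x. z(t := x)) \<in> K z \<rightarrow>\<^sub>M prefix_space X (Suc t)"
      using measurable_fun_upd_prefix_fixed[OF z] by (simp cong: measurable_cong_sets)
    then show "distr (append_law X t (K z) z) (prefix_space X (Suc (Suc t))) (prefix_cons (Suc (Suc t)) c) =
        append_law X (Suc t) (K z) (prefix_cons (Suc t) c z)"
      unfolding append_law_def
      by (simp add: distr_distr[OF measurable_prefix_cons[OF c]] comp_def prefix_cons_fun_upd[symmetric])
  qed
  finally show ?thesis .
qed

lemma prefix_law_0:
  assumes "Q \<in> space (prob_algebra (seq_space X))"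
  shows "prefix_law X Q 0 = return (prefix_space X 0) (\<lambda>_. undefined)"
proof -
  have "pref 0 = (\<lambda>_ _. undefined)"
    by (auto simp: pref_def fun_eq_iff)
  then show ?thesis
    using assms prob_space.distr_const[of Q "\<lambda>_. undefined" "prefix_space X 0"]
    by (simp add: prefix_law_def space_prob_algebra space_prefix_space)
qed

section \<open>Two-point mixtures\<close>

context
  fixes X :: "real set" and \<mu> a b p :: real
    and Q :: "bool \<Rightarrow> (nat \<Rightarrow> real) measure"
    and K :: "bool \<Rightarrow> nat \<Rightarrow> (nat \<Rightarrow> real) \<Rightarrow> real measure"
  assumes a: "a \<in> X" and b: "b \<in> X" and a_ne_b: "a \<noteq> b"
    and p: "0 \<le> p" "p \<le> 1" and mean: "p * a + (1 - p) * b = \<mu>"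
    and Q: "\<And>\<beta>. Q \<beta> \<in> space (prob_algebra (seq_space X))"
    and K: "\<And>\<beta>. hyp_kernel X \<mu> (Q \<beta>) (K \<beta>)"
begin

definition mix_head :: "bool \<Rightarrow> real" where
  "mix_head \<beta> = (if \<beta> then a else b)"

definition mix_branch :: "bool \<Rightarrow> (nat \<Rightarrow> real) measure" where
  "mix_branch \<beta> = distr (Q \<beta>) (seq_space X) (pcons (mix_head \<beta>))"

definition mixture :: "(nat \<Rightarrow> real) measure" where
  "mixture = measure_pmf (bernoulli_pmf p) \<bind> mix_branch"

definition mixture_kernel :: "nat \<Rightarrow> (nat \<Rightarrow> real) \<Rightarrow> real measure" where
  "mixture_kernel t z = (case t of
      0 \<Rightarrow> distr (measure_pmf (bernoulli_pmf p)) (obs_space X) mix_head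
    | Suc s \<Rightarrow> K (z 0 = a) s (prefix_tl s z))"

lemma mix_head_in: "mix_head \<beta> \<in> X"
  using a b by (simp add: mix_head_def)

lemma mix_head_eq_iff [simp]: "mix_head \<beta> = a \<longleftrightarrow> \<beta>"
  using a_ne_b by (simp add: mix_head_def)

lemma sets_Q: "sets (Q \<beta>) = sets (seq_space X)"
  using Q by (simp add: space_prob_algebra)

lemma measurable_pcons_mix_head: "pcons (mix_head \<beta>) \<in> Q \<beta> \<rightarrow>\<^sub>M seq_space X"
  using measurable_pcons[OF mix_head_in] by (simp cong: measurable_cong_sets add: sets_Q)

lemma mix_branch_prob: "mix_branch \<beta> \<in> space (prob_algebra (seq_space X))"
  using Q prob_space.prob_space_distr[OF _ measurable_pcons_mix_head]
  by (simp add: mix_branch_def space_prob_algebra)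

lemma measurable_mix_branch:
  "mix_branch \<in> measure_pmf (bernoulli_pmf p) \<rightarrow>\<^sub>M prob_algebra (seq_space X)"
  by (rule measurable_from_measure_pmf) (rule mix_branch_prob)

lemma mixture_prob: "mixture \<in> space (prob_algebra (seq_space X))"
proof -
  have "measure_pmf (bernoulli_pmf p) \<in> space (prob_algebra (measure_pmf (bernoulli_pmf p)))"
    by (simp add: space_prob_algebra prob_space_measure_pmf)
  then show ?thesis
    using prob_space_bind'[OF _ measurable_mix_branch] sets_bind'[OF _ measurable_mix_branch]
    by (simp add: mixture_def space_prob_algebra)
qed

lemma prefix_law_mixture:
  "prefix_law X mixture t = measure_pmf (bernoulli_pmf p) \<bind> (\<lambda>\<beta>. prefix_law X (mix_branch \<beta>) t)"
  unfolding mixture_def prefix_law_def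
  by (rule distr_bind[OF measurable_prob_algebraD[OF measurable_mix_branch] _ measurable_pref]) simp

lemma prefix_law_mix_branch_Suc:
  "prefix_law X (mix_branch \<beta>) (Suc t) =
    distr (prefix_law X (Q \<beta>) t) (prefix_space X (Suc t)) (prefix_cons (Suc t) (mix_head \<beta>))"
proof -
  have "pref (Suc t) \<circ> pcons (mix_head \<beta>) = prefix_cons (Suc t) (mix_head \<beta>) \<circ> pref t"
    by (auto simp: pref_Suc_pcons)
  moreover have "pref t \<in> Q \<beta> \<rightarrow>\<^sub>M prefix_space X t"
    by (simp cong: measurable_cong_sets add: sets_Q)
  ultimately show ?thesis
    unfolding prefix_law_def mix_branch_def
    by (simp add: distr_distr[OF measurable_pref measurable_pcons_mix_head]
        distr_distr[OF measurable_prefix_cons[OF mix_head_in]])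
qed

lemma measurable_K: "K \<beta> t \<in> prefix_space X t \<rightarrow>\<^sub>M prob_algebra (obs_space X)"
  using K by (simp add: hyp_kernel_def)

lemma measurable_mixture_kernel: "mixture_kernel t \<in> prefix_space X t \<rightarrow>\<^sub>M prob_algebra (obs_space X)"
proof (cases t)
  case 0
  have "distr (measure_pmf (bernoulli_pmf p)) (obs_space X) mix_head \<in> space (prob_algebra (obs_space X))"
    using prob_space.prob_space_distr[OF prob_space_measure_pmf measurable_from_measure_pmf, of mix_head]
    by (simp add: space_prob_algebra mix_head_in)
  with 0 show ?thesis
    unfolding mixture_kernel_def by (simp add: measurable_const)
next
  case (Suc s)
  have "(\<lambda>z. if z 0 = a then K True s (prefix_tl s z) else K False s (prefix_tl s z))
      \<in> prefix_space X (Suc s) \<rightarrow>\<^sub>M prob_algebra (obs_space X)"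
    using sets_prefix_space_head_eq[OF a]
    by (intro measurable_If measurable_compose[OF measurable_prefix_tl measurable_K])
  moreover have "(\<lambda>z. K (z 0 = a) s (prefix_tl s z)) =
      (\<lambda>z. if z 0 = a then K True s (prefix_tl s z) else K False s (prefix_tl s z))"
    by auto
  ultimately show ?thesis
    unfolding Suc mixture_kernel_def by simp
qed

lemma mixture_step_0:
  "prefix_law X mixture (Suc 0) =
    prefix_law X mixture 0 \<bind> (\<lambda>z. append_law X 0 (mixture_kernel 0 z) z)"
proof -
  let ?B = "measure_pmf (bernoulli_pmf p)"
  let ?u = "(\<lambda>_. undefined) :: nat \<Rightarrow> real"
  have u: "?u \<in> space (prefix_space X 0)"
    by (simp add: space_prefix_space)
  have "prefix_law X (mix_branch \<beta>) (Suc 0) = return (prefix_space X (Suc 0)) (?u(0 := mix_head \<beta>))" for \<beta>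
  proof -
    have "prefix_cons (Suc 0) (mix_head \<beta>) ?u = ?u(0 := mix_head \<beta>)"
      by (auto simp: prefix_cons_def pcons_def fun_eq_iff)
    then show ?thesis
      by (simp add: prefix_law_mix_branch_Suc prefix_law_0[OF Q]
          distr_return[OF measurable_prefix_cons[OF mix_head_in] u])
  qed
  then have "prefix_law X mixture (Suc 0) = ?B \<bind> (\<lambda>\<beta>. return (prefix_space X (Suc 0)) (?u(0 := mix_head \<beta>)))"
    by (simp add: prefix_law_mixture)
  also have "\<dots> = distr ?B (prefix_space X (Suc 0)) ((\<lambda>x. ?u(0 := x)) \<circ> mix_head)"
    unfolding comp_def
    by (rule bind_return_distr')
      (auto intro!: measurable_from_measure_pmf measurable_space[OF measurable_fun_upd_prefix_fixed[OF u]]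
        simp: mix_head_in)
  also have "\<dots> = append_law X 0 (mixture_kernel 0 ?u) ?u"
    unfolding append_law_def mixture_kernel_def
    by (simp add: distr_distr[OF measurable_fun_upd_prefix_fixed[OF u] measurable_from_measure_pmf] mix_head_in)
  also have "\<dots> = prefix_law X mixture 0 \<bind> (\<lambda>z. append_law X 0 (mixture_kernel 0 z) z)"
    by (simp add: prefix_law_0[OF mixture_prob]
        bind_return[OF measurable_append_law[OF measurable_mixture_kernel] u])
  finally show ?thesis .
qed

lemma mixture_step_Suc:
  "prefix_law X mixture (Suc (Suc s)) =
    prefix_law X mixture (Suc s) \<bind> (\<lambda>z. append_law X (Suc s) (mixture_kernel (Suc s) z) z)"
proof -
  let ?F = "\<lambda>z. append_law X (Suc s) (mixture_kernel (Suc s) z) z"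
  let ?B = "measure_pmf (bernoulli_pmf p)"
  let ?G = "\<lambda>\<beta>. prefix_law X (Q \<beta>) s \<bind>
      (\<lambda>z. append_law X (Suc s) (K \<beta> s z) (prefix_cons (Suc s) (mix_head \<beta>) z))"
  have F: "?F \<in> prefix_space X (Suc s) \<rightarrow>\<^sub>M subprob_algebra (prefix_space X (Suc (Suc s)))"
    by (rule measurable_append_law[OF measurable_mixture_kernel])
  have step: "prefix_law X (Q \<beta>) (Suc s) =
      prefix_law X (Q \<beta>) s \<bind> (\<lambda>z. append_law X s (K \<beta> s z) z)" for \<beta>
    using K by (simp add: hyp_kernel_def)
  have "prefix_law X mixture (Suc (Suc s)) = ?B \<bind> ?G"
    by (simp add: prefix_law_mixture prefix_law_mix_branch_Suc
        prefix_law_Suc_prefix_cons[OF Q mix_head_in measurable_K step])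
  moreover have "prefix_law X (mix_branch \<beta>) (Suc s) \<bind> ?F = ?G \<beta>" for \<beta>
  proof -
    have "prefix_cons (Suc s) (mix_head \<beta>) \<in> prefix_law X (Q \<beta>) s \<rightarrow>\<^sub>M prefix_space X (Suc s)"
      using measurable_prefix_cons[OF mix_head_in] by (simp add: prefix_law_def cong: measurable_cong_sets)
    then have "prefix_law X (mix_branch \<beta>) (Suc s) \<bind> ?F =
        prefix_law X (Q \<beta>) s \<bind> (\<lambda>z. ?F (prefix_cons (Suc s) (mix_head \<beta>) z))"
      unfolding prefix_law_mix_branch_Suc by (rule bind_distr[OF _ F space_prefix_law_ne[OF Q]])
    also have "\<dots> = ?G \<beta>"
    proof (rule bind_cong[OF refl])
      fix z assume "z \<in> space (prefix_law X (Q \<beta>) s)"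
      then have "prefix_tl s (prefix_cons (Suc s) (mix_head \<beta>) z) = z"
        by (simp add: prefix_law_def prefix_tl_prefix_cons)
      then show "?F (prefix_cons (Suc s) (mix_head \<beta>) z) =
          append_law X (Suc s) (K \<beta> s z) (prefix_cons (Suc s) (mix_head \<beta>) z)"
        by (simp add: mixture_kernel_def prefix_cons_def)
    qed
    finally show ?thesis .
  qed
  then have "prefix_law X mixture (Suc s) \<bind> ?F = ?B \<bind> ?G"
    unfolding prefix_law_mixture
    by (simp add: bind_assoc[OF measurable_prob_algebraD[OF
          measurable_from_measure_pmf[OF prefix_law_prob[OF mix_branch_prob]]] F])
  ultimately show ?thesis
    by simp
qed

lemma two_point_mean_mixture_kernel_0: "two_point_mean X \<mu> (mixture_kernel 0 z)"
proof -
  let ?M = "distr (measure_pmf (bernoulli_pmf p)) (obs_space X) mix_head"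
  have head: "mix_head \<in> measure_pmf (bernoulli_pmf p) \<rightarrow>\<^sub>M obs_space X"
    by (rule measurable_from_measure_pmf) (simp add: mix_head_in)
  have "(\<lambda>x. x) \<in> borel_measurable (obs_space X)"
    unfolding obs_space_def by (intro measurable_restrict_space1) simp
  then have "(\<integral>x. x \<partial>?M) = (\<integral>\<beta>. mix_head \<beta> \<partial>measure_pmf (bernoulli_pmf p))"
    by (rule integral_distr[OF head])
  also have "\<dots> = \<mu>"
    using p mean by (simp add: mix_head_def mult.commute)
  finally have "(\<integral>x. x \<partial>?M) = \<mu>" .
  have "X - {a, b} \<in> sets (obs_space X)"
    using sets_obs_space_singleton[OF a] sets_obs_space_singleton[OF b]
    by (metis Diff_insert sets.Diff sets.top space_obs_space)
  moreover have "mix_head -` (X - {a, b}) = {}"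
    by (auto simp: mix_head_def)
  ultimately have "emeasure ?M (space (obs_space X) - {a, b}) = 0"
    by (simp add: emeasure_distr[OF head])
  with \<open>(\<integral>x. x \<partial>?M) = \<mu>\<close> show ?thesis
    by (auto simp: two_point_mean_def mixture_kernel_def)
qed

lemma AE_mix_branch:
  assumes "AE w in Q \<beta>. R (pcons (mix_head \<beta>) w)"
  shows "AE y in mix_branch \<beta>. R y"
proof -
  have "seq_tl \<in> seq_space X \<rightarrow>\<^sub>M Q \<beta>"
    by (simp add: sets_Q cong: measurable_cong_sets)
  then have "AE y in mix_branch \<beta>. R (pcons (mix_head \<beta>) (seq_tl y))"
    unfolding mix_branch_def by (rule AE_distr_left_inverse[OF measurable_pcons_mix_head _ _ assms]) simp
  moreover have "AE y in mix_branch \<beta>. y 0 = mix_head \<beta>"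
    unfolding mix_branch_def
    by (simp add: AE_distr_iff[OF measurable_pcons_mix_head sets_seq_space_head_eq[OF mix_head_in]])
  ultimately show ?thesis
    by eventually_elim (metis pcons_head_seq_tl)
qed

lemma AE_two_point_mean_mixture_kernel:
  "AE y in mixture. two_point_mean X \<mu> (mixture_kernel t (pref t y))"
proof (cases t)
  case 0
  then show ?thesis
    by (simp add: two_point_mean_mixture_kernel_0)
next
  case (Suc s)
  have "mixture_kernel (Suc s) (pref (Suc s) (pcons (mix_head \<beta>) w)) = K \<beta> s (pref s w)" for \<beta> w
    using pref_seq_tl[of s "pcons (mix_head \<beta>) w"] by (simp add: mixture_kernel_def pref_def)
  moreover have "AE w in Q \<beta>. two_point_mean X \<mu> (K \<beta> s (pref s w))" for \<beta>
    using K by (simp add: hyp_kernel_def)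
  ultimately show ?thesis
    unfolding mixture_def Suc
    by (intro AE_bind_measure_pmf[OF measurable_prob_algebraD[OF measurable_mix_branch]] AE_mix_branch)
      simp
qed

lemma mixture_hyp_class: "mixture \<in> hyp_class X \<mu>"
proof -
  have "prefix_law X mixture (Suc t) =
      prefix_law X mixture t \<bind> (\<lambda>z. append_law X t (mixture_kernel t z) z)" for t
    by (cases t) (simp_all only: mixture_step_0 mixture_step_Suc)
  then have "hyp_kernel X \<mu> mixture mixture_kernel"
    using measurable_mixture_kernel AE_two_point_mean_mixture_kernel by (simp add: hyp_kernel_def)
  then show ?thesis
    using mixture_prob hyp_class_iff by blast
qed

lemma nn_integral_mixture_branch_time:
  assumes E: "\<And>t. E t \<in> borel_measurable (prefix_space X t)"
    and \<tau>: "\<And>\<beta>. \<tau> \<beta> \<in> stopping_times X"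
  shows "(\<integral>\<^sup>+y. ennreal (stopped E (branch_time a (\<tau> True) (\<tau> False)) y) \<partial>mixture) =
    ennreal p * (\<integral>\<^sup>+w. ennreal (stopped (shifted E a) (\<tau> True) w) \<partial>Q True) +
    ennreal (1 - p) * (\<integral>\<^sup>+w. ennreal (stopped (shifted E b) (\<tau> False) w) \<partial>Q False)"
proof -
  let ?f = "\<lambda>y. ennreal (stopped E (branch_time a (\<tau> True) (\<tau> False)) y)"
  have f: "?f \<in> borel_measurable (seq_space X)"
    using borel_measurable_stopped[OF branch_time_stopping_time[OF a \<tau> \<tau>] E] by measurable
  have "(\<integral>\<^sup>+y. ?f y \<partial>mix_branch \<beta>) =
      (\<integral>\<^sup>+w. ennreal (stopped (shifted E (mix_head \<beta>)) (\<tau> \<beta>) w) \<partial>Q \<beta>)" for \<beta>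
  proof -
    have "(\<integral>\<^sup>+y. ?f y \<partial>mix_branch \<beta>) = (\<integral>\<^sup>+w. ?f (pcons (mix_head \<beta>) w) \<partial>Q \<beta>)"
      unfolding mix_branch_def
      by (rule nn_integral_distr[OF measurable_pcons_mix_head]) (use f in \<open>simp cong: measurable_cong_sets\<close>)
    then show ?thesis
      by (simp add: stopped_branch_time_pcons)
  qed
  then show ?thesis
    unfolding mixture_def
    using p by (simp add: nn_integral_bind[OF f measurable_prob_algebraD[OF measurable_mix_branch]]
        mix_head_def ennreal_mult' mult.commute)
qed

end

section \<open>Two-point tests\<close>

definition shifted_expectation :: "(nat \<Rightarrow> (nat \<Rightarrow> real) \<Rightarrow> real) \<Rightarrow> real \<Rightarrow>
    ((nat \<Rightarrow> real) \<Rightarrow> nat) \<Rightarrow> (nat \<Rightarrow> real) measure \<Rightarrow> ennreal" where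
  "shifted_expectation E x \<tau> Q = (\<integral>\<^sup>+y. ennreal (stopped (shifted E x) \<tau> y) \<partial>Q)"

lemma two_point_test_bound:
  assumes E: "e_process X \<mu> E" and a: "a \<in> X" and b: "b \<in> X" and a_ne_b: "a \<noteq> b"
    and p: "0 \<le> p" "p \<le> 1" and mean: "p * a + (1 - p) * b = \<mu>"
    and \<tau>a: "\<tau>a \<in> stopping_times X" and \<tau>b: "\<tau>b \<in> stopping_times X"
    and Qa: "Qa \<in> hyp_class X \<mu>" and Qb: "Qb \<in> hyp_class X \<mu>"
  shows "ennreal p * shifted_expectation E a \<tau>a Qa + ennreal (1 - p) * shifted_expectation E b \<tau>b Qb \<le> 1"
proof -
  obtain Ka Kb where "hyp_kernel X \<mu> Qa Ka" "hyp_kernel X \<mu> Qb Kb"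
    using Qa Qb hyp_class_iff by blast
  moreover define Q where "Q \<beta> = (if \<beta> then Qa else Qb)" for \<beta>
  moreover define K where "K \<beta> = (if \<beta> then Ka else Kb)" for \<beta>
  moreover define \<tau> where "\<tau> \<beta> = (if \<beta> then \<tau>a else \<tau>b)" for \<beta>
  ultimately have Q: "Q \<beta> \<in> space (prob_algebra (seq_space X))" and K: "hyp_kernel X \<mu> (Q \<beta>) (K \<beta>)"
    and \<tau>: "\<tau> \<beta> \<in> stopping_times X" for \<beta>
    using Qa Qb \<tau>a \<tau>b hyp_class_iff by auto
  have E_meas: "\<And>t. E t \<in> borel_measurable (prefix_space X t)"
    using E by (simp add: e_process_def)
  have "(\<integral>\<^sup>+y. ennreal (stopped E (branch_time a (\<tau> True) (\<tau> False)) y) \<partial>mixture X a b p Q) \<le> 1"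
    using E mixture_hyp_class[where Q = Q and K = K, OF a b a_ne_b p mean Q K]
      branch_time_stopping_time[OF a \<tau> \<tau>]
    unfolding e_process_def by blast
  then show ?thesis
    using nn_integral_mixture_branch_time[where Q = Q and K = K and \<tau> = \<tau>,
        OF a b a_ne_b p mean Q K E_meas \<tau>]
    by (simp add: shifted_expectation_def Q_def \<tau>_def)
qed

context
  fixes X :: "real set" and \<mu> :: real and E :: "nat \<Rightarrow> (nat \<Rightarrow> real) \<Rightarrow> real"
  assumes X: "0 \<in> X" "1 \<in> X" and \<mu>: "0 < \<mu>" "\<mu> < 1" and E: "e_process X \<mu> E"
begin

lemma shifted_expectation_finite:
  assumes x: "x \<in> X" and \<tau>: "\<tau> \<in> stopping_times X" and Q: "Q \<in> hyp_class X \<mu>"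
  shows "shifted_expectation E x \<tau> Q \<noteq> \<top>"
proof (cases "x \<le> \<mu>")
  case True
  define p where "p = (1 - \<mu>) / (1 - x)"
  have "x < 1"
    using True \<mu> by simp
  then have "p * (1 - x) = 1 - \<mu>"
    by (simp add: p_def)
  then have "p * x + (1 - p) * 1 = \<mu>"
    by (simp add: algebra_simps)
  moreover have "0 < p" "p \<le> 1"
    using True \<mu> \<open>x < 1\<close> by (simp_all add: p_def divide_le_eq)
  ultimately have "ennreal p * shifted_expectation E x \<tau> Q + ennreal (1 - p) * shifted_expectation E 1 \<tau> Q \<le> 1"
    using True \<mu> by (intro two_point_test_bound[OF E x X(2) _ _ _ _ \<tau> \<tau> Q Q]) auto
  then show ?thesis
    using \<open>0 < p\<close> by (auto simp: ennreal_mult_eq_top_iff top_unique)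
next
  case False
  define p where "p = 1 - \<mu> / x"
  have p: "0 \<le> p" "p < 1" "p * 0 + (1 - p) * x = \<mu>"
    using False \<mu> by (auto simp: p_def field_simps)
  then have "ennreal p * shifted_expectation E 0 \<tau> Q + ennreal (1 - p) * shifted_expectation E x \<tau> Q \<le> 1"
    using False \<mu> by (intro two_point_test_bound[OF E X(1) x _ _ _ _ \<tau> \<tau> Q Q]) auto
  then show ?thesis
    using p(2) by (auto simp: ennreal_mult_eq_top_iff top_unique)
qed

lemma two_point_bound:
  assumes a: "a \<in> X" and b: "b \<in> X" and ab: "a \<le> \<mu>" "\<mu> < b"
    and \<tau>a: "\<tau>a \<in> stopping_times X" and \<tau>b: "\<tau>b \<in> stopping_times X"
    and Qa: "Qa \<in> hyp_class X \<mu>" and Qb: "Qb \<in> hyp_class X \<mu>"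
  shows "(b - \<mu>) * enn2real (shifted_expectation E a \<tau>a Qa) +
      (\<mu> - a) * enn2real (shifted_expectation E b \<tau>b Qb) \<le> b - a"
proof -
  define p where "p = (b - \<mu>) / (b - a)"
  have p_ba: "p * (b - a) = b - \<mu>"
    using ab by (simp add: p_def)
  then have q_ba: "(1 - p) * (b - a) = \<mu> - a" and mean: "p * a + (1 - p) * b = \<mu>"
    by (simp_all add: algebra_simps)
  have p: "0 \<le> p" "p \<le> 1"
    using ab by (simp_all add: p_def divide_le_eq)
  have "ennreal p * shifted_expectation E a \<tau>a Qa + ennreal (1 - p) * shifted_expectation E b \<tau>b Qb \<le> 1"
    using ab by (intro two_point_test_bound[OF E a b _ p mean \<tau>a \<tau>b Qa Qb]) auto
  moreover have "ennreal p * shifted_expectation E a \<tau>a Qa + ennreal (1 - p) * shifted_expectation E b \<tau>b Qb =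
      ennreal (p * enn2real (shifted_expectation E a \<tau>a Qa) +
        (1 - p) * enn2real (shifted_expectation E b \<tau>b Qb))"
    using p shifted_expectation_finite[OF a \<tau>a Qa] shifted_expectation_finite[OF b \<tau>b Qb]
    by (simp add: ennreal_mult ennreal_plus ennreal_enn2real_if)
  ultimately have "p * enn2real (shifted_expectation E a \<tau>a Qa) +
      (1 - p) * enn2real (shifted_expectation E b \<tau>b Qb) \<le> 1"
    by simp
  then have "(b - a) * (p * enn2real (shifted_expectation E a \<tau>a Qa) +
      (1 - p) * enn2real (shifted_expectation E b \<tau>b Qb)) \<le> b - a"
    using mult_left_mono[OF _ less_imp_le[of 0 "b - a"]] ab by simp
  then show ?thesis
    by (simp only: distrib_left mult.assoc[symmetric] mult.commute[of "b - a"] p_ba q_ba)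
qed

end

theorem lemma5:
  fixes X :: "real set" and \<mu> :: real
    and E :: "nat \<Rightarrow> (nat \<Rightarrow> real) \<Rightarrow> real"
  assumes "X \<in> sets borel" and "X \<subseteq> {0..1}" and "0 \<in> X" and "1 \<in> X"
    and "0 < \<mu>" and "\<mu> < 1"
    and "e_process X \<mu> E"
  shows "\<exists>l1 \<in> {1 / (\<mu> - 1) .. 1 / \<mu>}.
           \<forall>\<tau> \<in> stopping_times X. \<forall>Q \<in> hyp_class X \<mu>. \<forall>x \<in> X.
             (\<integral>\<^sup>+ y. ennreal (stopped (shifted E x) \<tau> y) \<partial>Q) \<le> ennreal (1 + l1 * (x - \<mu>))"
proof -
  let ?F = "\<lambda>x (\<tau>, Q). enn2real (shifted_expectation E x \<tau> Q)"
  obtain l where l: "l \<in> {1 / (\<mu> - 1) .. 1 / \<mu>}"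
    and bound: "\<forall>x \<in> X. \<forall>j \<in> stopping_times X \<times> hyp_class X \<mu>. ?F x j \<le> 1 + l * (x - \<mu>)"
    using supporting_line_of_two_point_bounds[of \<mu> X "stopping_times X \<times> hyp_class X \<mu>" ?F]
      two_point_bound[OF assms(3-7)] assms(3-6) by auto
  have "shifted_expectation E x \<tau> Q \<le> ennreal (1 + l * (x - \<mu>))"
    if "x \<in> X" "\<tau> \<in> stopping_times X" "Q \<in> hyp_class X \<mu>" for x \<tau> Q
  proof -
    have "?F x (\<tau>, Q) \<le> 1 + l * (x - \<mu>)"
      using bound that by blast
    then have "enn2real (shifted_expectation E x \<tau> Q) \<le> 1 + l * (x - \<mu>)"
      by simp
    then have "ennreal (enn2real (shifted_expectation E x \<tau> Q)) \<le> ennreal (1 + l * (x - \<mu>))"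
      by (rule ennreal_leI)
    then show ?thesis
      using shifted_expectation_finite[OF assms(3-7) that] by (simp add: ennreal_enn2real_if)
  qed
  with l show ?thesis
    unfolding shifted_expectation_def by blast
qed

end
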